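(* Let $\Delta\geq1$ be an integer and $\gamma,\eta$ reals with $0<\gamma\leq1/2$ and $\Delta^{-1/2}\leq\eta\leq\gamma^2/8$. Let $G$ be a finite graph with $d_G(v)\in\{\Delta-1,\Delta\}$ for all vertices $v$ and $\Delta_2(G)\leq\eta\Delta$. Let $A\subseteq V(G)$ be a $p$-random set with $p=\gamma/\Delta$ and let $G'=G\setminus(A\cup N_G(A))$. Then for all vertices $u,v$ of $G$, \[ \mathbb{E}\big(d_{G'}(v)\,\big|\,v\in G'\big)\leq(1-\gamma+\gamma^2)d_G(v), \] and (for $u\neq v$) \[ \mathbb{E}\big(d_{G'}(u,v)\,\big|\,u,v\in G'\big)\leq(1-\gamma+\gamma^2)d_G(u,v). \]
   Context: A $p$-random subset includes each element independently with probability $p$. $N_G(v)$ is the neighbourhood of $v$, $N_G(U)=\bigcup_{u\in U}N_G(u)$, $d_G(v)=|N_G(v)|$, $d_G(u,v)=|N_G(u)\cap N_G(v)|$, $\Delta_2(G)=\max_{u\neq v}d_G(u,v)$. $G\setminus S$ is the induced subgraph on $V(G)\setminus S$. *)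

theory Defs
  imports Complex_Main
begin

text \<open>A finite simple graph is given by a finite vertex set V and a symmetric,
irreflexive adjacency relation E (only adjacencies inside V are considered).\<close>

definition simple_graph :: "'a set \<Rightarrow> ('a \<Rightarrow> 'a \<Rightarrow> bool) \<Rightarrow> bool" where
  "simple_graph V E \<longleftrightarrow> finite V \<and> (\<forall>u v. E u v \<longrightarrow> E v u) \<and> (\<forall>v. \<not> E v v)"

text \<open>Neighbourhood of v in the graph (V,E); for an induced subgraph, pass the smaller
vertex set with the same E.\<close>
definition nbhd :: "'a set \<Rightarrow> ('a \<Rightarrow> 'a \<Rightarrow> bool) \<Rightarrow> 'a \<Rightarrow> 'a set" where
  "nbhd V E v = {u \<in> V. E v u}"

definition nbhd_set :: "'a set \<Rightarrow> ('a \<Rightarrow> 'a \<Rightarrow> bool) \<Rightarrow> 'a set \<Rightarrow> 'a set" where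
  "nbhd_set V E U = (\<Union>u\<in>U. nbhd V E u)"

definition deg :: "'a set \<Rightarrow> ('a \<Rightarrow> 'a \<Rightarrow> bool) \<Rightarrow> 'a \<Rightarrow> nat" where
  "deg V E v = card (nbhd V E v)"

definition codeg :: "'a set \<Rightarrow> ('a \<Rightarrow> 'a \<Rightarrow> bool) \<Rightarrow> 'a \<Rightarrow> 'a \<Rightarrow> nat" where
  "codeg V E u v = card (nbhd V E u \<inter> nbhd V E v)"

definition del_verts :: "'a set \<Rightarrow> 'a set \<Rightarrow> 'a set" where
  "del_verts V S = V - S"

text \<open>Probability that a p-random subset of V equals A.\<close>
definition rand_prob :: "'a set \<Rightarrow> real \<Rightarrow> 'a set \<Rightarrow> real" where
  "rand_prob V p A = p ^ card A * (1 - p) ^ (card V - card A)"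

text \<open>Conditional expectation E(X | B) for a p-random subset A of V.\<close>
definition cond_exp :: "'a set \<Rightarrow> real \<Rightarrow> ('a set \<Rightarrow> real) \<Rightarrow> ('a set \<Rightarrow> bool) \<Rightarrow> real" where
  "cond_exp V p X B =
     (\<Sum>A\<in>Pow V. rand_prob V p A * (if B A then X A else 0)) /
     (\<Sum>A\<in>Pow V. rand_prob V p A * (if B A then 1 else 0))"

end

(* A vertex x survives the deletion of A \<union> N(A) iff A misses its closed neighbourhood N[x].
   Conditioned on u and v surviving, i.e. on A missing S = N[u] \<union> N[v], a common neighbour w
   survives iff A also misses N[w] - S, which by independence has probability (1 - p)^|N[w] - S|.
   As |N[w]| \<ge> \<Delta> and N[w] meets each of N[u], N[v] in at most 2 + \<eta>\<Delta> vertices, the exponent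
   is at least \<Delta> - 4 - 2\<eta>\<Delta>; then (1 - \<gamma>/\<Delta>)^n \<le> exp (-\<gamma>(1 - \<delta>)) with \<delta> = 4/\<Delta> + 2\<eta> \<le> \<gamma>/2,
   and a second-order Taylor bound gives 1 - \<gamma> + \<gamma>^2. Summing over the common neighbours yields
   the codegree bound, and the degree bound is its case u = v. *)

theory Submission
  imports Defs
begin

lemma sum_Pow_power_card:
  fixes p q :: "'b :: comm_semiring_1"
  assumes "finite T"
  shows "(\<Sum>A\<in>Pow T. p ^ card A * q ^ card (T - A)) = (p + q) ^ card T"
  using prod_add[OF assms, of "\<lambda>_. p" "\<lambda>_. q"] by simp

lemma sum_rand_prob_disjoint:
  assumes "finite V" "S \<subseteq> V"
  shows "(\<Sum>A\<in>Pow V. rand_prob V p A * (if A \<inter> S = {} then 1 else 0)) = (1 - p) ^ card S"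
proof -
  have card_split: "card V - card A = card S + card (V - S - A)" if "A \<subseteq> V - S" for A
  proof -
    have "finite S" "finite A" using assms that finite_subset by blast+
    moreover have "card (V - S) = card V - card S" "card (V - S - A) = card (V - S) - card A"
      using assms that \<open>finite S\<close> \<open>finite A\<close> by (simp_all add: card_Diff_subset)
    moreover have "card S \<le> card V" "card A \<le> card (V - S)"
      using assms that by (simp_all add: card_mono)
    ultimately show ?thesis by linarith
  qed
  have "(\<Sum>A\<in>Pow V. rand_prob V p A * (if A \<inter> S = {} then 1 else 0))
      = (\<Sum>A\<in>Pow (V - S). rand_prob V p A)"
    using assms by (intro sum.mono_neutral_cong_right) auto
  also have "\<dots> = (1 - p) ^ card S * (\<Sum>A\<in>Pow (V - S). p ^ card A * (1 - p) ^ card (V - S - A))"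
    unfolding sum_distrib_left by (intro sum.cong) (simp_all add: rand_prob_def card_split power_add)
  also have "\<dots> = (1 - p) ^ card S"
    using assms by (simp add: sum_Pow_power_card)
  finally show ?thesis .
qed

lemma cond_exp_cong:
  assumes "\<And>A. A \<subseteq> V \<Longrightarrow> B A \<longleftrightarrow> B' A" "\<And>A. A \<subseteq> V \<Longrightarrow> B A \<Longrightarrow> X A = X' A"
  shows "cond_exp V p X B = cond_exp V p X' B'"
  unfolding cond_exp_def using assms by (intro arg_cong2[where f = "(/)"] sum.cong) auto

lemma cond_exp_card_disjoint:
  fixes p :: real
  assumes "finite V" "S \<subseteq> V" "finite W" "\<And>w. w \<in> W \<Longrightarrow> C w \<subseteq> V" "p < 1"
  shows "cond_exp V p (\<lambda>A. real (card {w\<in>W. A \<inter> C w = {}})) (\<lambda>A. A \<inter> S = {})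
       = (\<Sum>w\<in>W. (1 - p) ^ card (C w - S))"
proof -
  have card_S_Un: "card (S \<union> C w) = card S + card (C w - S)" if "w \<in> W" for w
  proof -
    have "finite S" "finite (C w)"
      using assms that finite_subset by blast+
    then show ?thesis
      using card_Un_disjoint[of S "C w - S"] by simp
  qed
  have "(\<Sum>A\<in>Pow V. rand_prob V p A * (if A \<inter> S = {} then real (card {w\<in>W. A \<inter> C w = {}}) else 0))
      = (\<Sum>A\<in>Pow V. \<Sum>w\<in>W. rand_prob V p A * (if A \<inter> (S \<union> C w) = {} then 1 else 0))"
  proof (intro sum.cong refl)
    fix A
    have "real (card {w\<in>W. A \<inter> C w = {}}) = (\<Sum>w\<in>W. if A \<inter> C w = {} then 1 else 0)"
      using assms(3) by (simp add: sum.If_cases Int_def)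
    then show "rand_prob V p A * (if A \<inter> S = {} then real (card {w\<in>W. A \<inter> C w = {}}) else 0)
      = (\<Sum>w\<in>W. rand_prob V p A * (if A \<inter> (S \<union> C w) = {} then 1 else 0))"
      by (simp add: Int_Un_distrib sum_distrib_left if_distrib)
  qed
  also have "\<dots> = (\<Sum>w\<in>W. (1 - p) ^ card (S \<union> C w))"
    using assms by (subst sum.swap) (intro sum.cong refl sum_rand_prob_disjoint; auto)
  also have "\<dots> = (1 - p) ^ card S * (\<Sum>w\<in>W. (1 - p) ^ card (C w - S))"
    unfolding sum_distrib_left by (intro sum.cong) (simp_all add: card_S_Un power_add)
  finally show ?thesis
    using assms(5) by (simp add: cond_exp_def sum_rand_prob_disjoint[OF assms(1,2)])
qed

lemma exp_minus_le_quadratic: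
  fixes x :: real
  assumes "0 \<le> x"
  shows "exp (- x) \<le> 1 - x + x\<^sup>2 / 2"
proof -
  obtain t where "exp (- x) = (\<Sum>m<3. (- x) ^ m / fact m) + exp t / fact 3 * (- x) ^ 3"
    using Maclaurin_exp_le[of "- x" 3] by blast
  moreover have "(\<Sum>m<3. (- x) ^ m / fact m) = 1 - x + x\<^sup>2 / 2"
    by (simp add: numeral_3_eq_3 power2_eq_square)
  moreover have "exp t / fact 3 * (- x) ^ 3 \<le> 0"
    using assms by (simp add: mult_nonneg_nonpos)
  ultimately show ?thesis by linarith
qed

lemma one_minus_power_le_quadratic:
  fixes p x :: real
  assumes "0 \<le> p" "p \<le> 1" "0 \<le> x" "x \<le> p * real n"
  shows "(1 - p) ^ n \<le> 1 - x + x\<^sup>2 / 2"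
proof -
  have "(1 - p) ^ n \<le> exp (- p) ^ n"
    using assms(2) exp_minus_ge[of p] by (intro power_mono) auto
  also have "\<dots> = exp (- (p * real n))"
    by (simp add: exp_of_nat_mult[symmetric] mult.commute)
  also have "\<dots> \<le> exp (- x)"
    using assms(4) by simp
  also have "\<dots> \<le> 1 - x + x\<^sup>2 / 2"
    using assms(3) by (rule exp_minus_le_quadratic)
  finally show ?thesis .
qed

lemma four_div_add_two_eta_le:
  fixes \<Delta> :: nat and \<gamma> \<eta> :: real
  assumes "\<Delta> \<ge> 1" "0 < \<gamma>" "\<gamma> \<le> 1/2" "1 / sqrt (real \<Delta>) \<le> \<eta>" "\<eta> \<le> \<gamma>\<^sup>2 / 8"
  shows "4 / real \<Delta> + 2 * \<eta> \<le> \<gamma> / 2"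
proof -
  have "0 < 1 / sqrt (real \<Delta>)"
    using assms(1) by simp
  then have "4 / real \<Delta> \<le> 4 * \<eta>\<^sup>2"
    using assms(1,4) power_mono[OF assms(4), of 2] by (simp add: power_divide)
  moreover have "\<gamma>\<^sup>2 \<le> \<gamma> / 2"
    using assms(2,3) by (simp add: power2_eq_square)
  moreover have "\<eta>\<^sup>2 \<le> \<eta> / 32"
  proof -
    have "\<eta> \<le> 1 / 32"
      using assms(3,5) \<open>\<gamma>\<^sup>2 \<le> \<gamma> / 2\<close> by linarith
    moreover have "0 \<le> \<eta>"
      using \<open>0 < 1 / sqrt (real \<Delta>)\<close> assms(4) by linarith
    ultimately have "\<eta> * \<eta> \<le> \<eta> * (1 / 32)"
      by (rule mult_left_mono)
    then show ?thesis
      by (simp add: power2_eq_square)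
  qed
  ultimately show ?thesis
    using assms(2,5) by linarith
qed

lemma survival_power_le:
  fixes \<Delta> n :: nat and \<gamma> \<eta> :: real
  assumes "\<Delta> \<ge> 1" "0 < \<gamma>" "\<gamma> \<le> 1/2" "1 / sqrt (real \<Delta>) \<le> \<eta>" "\<eta> \<le> \<gamma>\<^sup>2 / 8"
    and "real \<Delta> - 4 - 2 * \<eta> * real \<Delta> \<le> real n"
  shows "(1 - \<gamma> / real \<Delta>) ^ n \<le> 1 - \<gamma> + \<gamma>\<^sup>2"
proof -
  define \<delta> where "\<delta> = 4 / real \<Delta> + 2 * \<eta>"
  have \<delta>_le: "\<delta> \<le> \<gamma> / 2"
    unfolding \<delta>_def using assms(1-5) by (rule four_div_add_two_eta_le)
  have "0 \<le> \<eta>"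
    using assms(4) order_trans[of 0 "1 / sqrt (real \<Delta>)" \<eta>] by simp
  then have "0 \<le> \<delta>"
    by (simp add: \<delta>_def)
  have "\<gamma> * (1 - \<delta>) = \<gamma> / real \<Delta> * (real \<Delta> - 4 - 2 * \<eta> * real \<Delta>)"
    using assms(1) by (simp add: \<delta>_def field_simps)
  also have "\<dots> \<le> \<gamma> / real \<Delta> * real n"
    using assms(2,6) by (intro mult_left_mono) auto
  finally have "(1 - \<gamma> / real \<Delta>) ^ n \<le> 1 - \<gamma> * (1 - \<delta>) + (\<gamma> * (1 - \<delta>))\<^sup>2 / 2"
    using assms(1-3) \<delta>_le by (intro one_minus_power_le_quadratic) auto
  also have "\<dots> \<le> 1 - \<gamma> + \<gamma> * \<delta> + \<gamma>\<^sup>2 / 2"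
  proof -
    have "(\<gamma> * (1 - \<delta>))\<^sup>2 \<le> \<gamma>\<^sup>2"
      using assms(2,3) \<open>0 \<le> \<delta>\<close> \<delta>_le by (intro power_mono) (auto simp: mult_left_le)
    then show ?thesis
      by (simp add: algebra_simps)
  qed
  also have "\<dots> \<le> 1 - \<gamma> + \<gamma>\<^sup>2"
  proof -
    have "\<gamma> * \<delta> \<le> \<gamma> * (\<gamma> / 2)"
      using \<delta>_le assms(2) by (intro mult_left_mono) auto
    then show ?thesis
      by (simp add: power2_eq_square)
  qed
  finally show ?thesis .
qed

definition closed_nbhd :: "'a set \<Rightarrow> ('a \<Rightarrow> 'a \<Rightarrow> bool) \<Rightarrow> 'a \<Rightarrow> 'a set" where
  "closed_nbhd V E v = insert v (nbhd V E v)"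

lemma closed_nbhd_subset: "v \<in> V \<Longrightarrow> closed_nbhd V E v \<subseteq> V"
  by (auto simp: closed_nbhd_def nbhd_def)

lemma card_closed_nbhd:
  assumes "simple_graph V E"
  shows "card (closed_nbhd V E v) = Suc (deg V E v)"
  using assms by (simp add: closed_nbhd_def deg_def nbhd_def simple_graph_def)

lemma card_closed_nbhd_Int_le:
  assumes "simple_graph V E"
  shows "card (closed_nbhd V E u \<inter> closed_nbhd V E v) \<le> 2 + codeg V E u v"
proof -
  have "finite (nbhd V E u \<inter> nbhd V E v)"
    using assms by (simp add: simple_graph_def nbhd_def)
  then have "card (closed_nbhd V E u \<inter> closed_nbhd V E v) \<le> card ({u, v} \<union> (nbhd V E u \<inter> nbhd V E v))"
    by (intro card_mono) (auto simp: closed_nbhd_def)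
  also have "\<dots> \<le> card {u, v} + card (nbhd V E u \<inter> nbhd V E v)"
    by (rule card_Un_le)
  also have "\<dots> \<le> 2 + codeg V E u v"
    by (simp add: codeg_def card_insert_le_m1)
  finally show ?thesis .
qed

lemma in_del_verts_closed_nbhd_iff:
  assumes "simple_graph V E" "A \<subseteq> V" "v \<in> V"
  shows "v \<in> del_verts V (A \<union> nbhd_set V E A) \<longleftrightarrow> A \<inter> closed_nbhd V E v = {}"
  using assms unfolding simple_graph_def del_verts_def nbhd_set_def nbhd_def closed_nbhd_def
  by blast

lemma codeg_del_verts_closed_nbhd:
  assumes "simple_graph V E" "A \<subseteq> V"
  shows "codeg (del_verts V (A \<union> nbhd_set V E A)) E u v
       = card {w \<in> nbhd V E u \<inter> nbhd V E v. A \<inter> closed_nbhd V E w = {}}"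
proof -
  have "nbhd (del_verts V (A \<union> nbhd_set V E A)) E x = {w \<in> nbhd V E x. A \<inter> closed_nbhd V E w = {}}" for x
    using in_del_verts_closed_nbhd_iff[OF assms]
    by (auto simp: nbhd_def del_verts_def)
  then show ?thesis
    unfolding codeg_def by (intro arg_cong[where f = card]) auto
qed

lemma codeg_self: "codeg V E v v = deg V E v"
  by (simp add: codeg_def deg_def)

lemma card_closed_nbhd_Diff_ge:
  fixes \<Delta> :: nat and \<eta> :: real
  assumes "simple_graph V E" "\<forall>x\<in>V. \<Delta> \<le> Suc (deg V E x)"
    and "\<forall>x\<in>V. \<forall>y\<in>V. x \<noteq> y \<longrightarrow> real (codeg V E x y) \<le> \<eta> * real \<Delta>"
    and "w \<in> V" "u \<in> V" "v \<in> V" "w \<noteq> u" "w \<noteq> v"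
  shows "real \<Delta> - 4 - 2 * \<eta> * real \<Delta>
           \<le> real (card (closed_nbhd V E w - (closed_nbhd V E u \<union> closed_nbhd V E v)))"
proof -
  let ?N = "closed_nbhd V E"
  have "finite (?N w)"
    using assms(1) by (simp add: closed_nbhd_def nbhd_def simple_graph_def)
  then have "card (?N w) \<le> card ((?N w - (?N u \<union> ?N v)) \<union> (?N w \<inter> ?N u) \<union> (?N w \<inter> ?N v))"
    by (intro card_mono) auto
  also have "\<dots> \<le> card ((?N w - (?N u \<union> ?N v)) \<union> (?N w \<inter> ?N u)) + card (?N w \<inter> ?N v)"
    by (rule card_Un_le)
  also have "\<dots> \<le> card (?N w - (?N u \<union> ?N v)) + card (?N w \<inter> ?N u) + card (?N w \<inter> ?N v)"
    using card_Un_le[of "?N w - (?N u \<union> ?N v)" "?N w \<inter> ?N u"] by simp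
  finally have "real (card (?N w))
      \<le> real (card (?N w - (?N u \<union> ?N v))) + real (card (?N w \<inter> ?N u)) + real (card (?N w \<inter> ?N v))"
    by linarith
  moreover have "real \<Delta> \<le> real (card (?N w))"
    using assms(2)[rule_format, OF assms(4)] by (simp add: card_closed_nbhd[OF assms(1)])
  moreover have Int_le: "real (card (?N w \<inter> ?N x)) \<le> 2 + \<eta> * real \<Delta>" if "x \<in> V" "w \<noteq> x" for x
    using card_closed_nbhd_Int_le[OF assms(1), of w x] assms(3,4) that by fastforce
  ultimately show ?thesis
    using Int_le[OF assms(5,7)] Int_le[OF assms(6,8)] by linarith
qed

lemma cond_exp_codeg_survivors_le:
  fixes \<Delta> :: nat and \<gamma> \<eta> :: real
  assumes "\<Delta> \<ge> 1" "0 < \<gamma>" "\<gamma> \<le> 1/2" "1 / sqrt (real \<Delta>) \<le> \<eta>" "\<eta> \<le> \<gamma>\<^sup>2 / 8"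
    and "simple_graph V E" "\<forall>x\<in>V. \<Delta> \<le> Suc (deg V E x)"
    and "\<forall>x\<in>V. \<forall>y\<in>V. x \<noteq> y \<longrightarrow> real (codeg V E x y) \<le> \<eta> * real \<Delta>"
    and "u \<in> V" "v \<in> V"
  shows "cond_exp V (\<gamma> / real \<Delta>)
           (\<lambda>A. real (codeg (del_verts V (A \<union> nbhd_set V E A)) E u v))
           (\<lambda>A. u \<in> del_verts V (A \<union> nbhd_set V E A) \<and> v \<in> del_verts V (A \<union> nbhd_set V E A))
         \<le> (1 - \<gamma> + \<gamma>\<^sup>2) * real (codeg V E u v)"
proof -
  let ?N = "closed_nbhd V E"
  define S where "S = ?N u \<union> ?N v"
  define W where "W = nbhd V E u \<inter> nbhd V E v"
  have "finite V"
    using assms(6) by (simp add: simple_graph_def)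
  have "W \<subseteq> V"
    by (auto simp: W_def nbhd_def)
  have "S \<subseteq> V"
    using assms(9,10) by (simp add: S_def closed_nbhd_subset)
  have "?N w \<subseteq> V" if "w \<in> W" for w
    using that \<open>W \<subseteq> V\<close> by (intro closed_nbhd_subset) auto
  have "cond_exp V (\<gamma> / real \<Delta>)
           (\<lambda>A. real (codeg (del_verts V (A \<union> nbhd_set V E A)) E u v))
           (\<lambda>A. u \<in> del_verts V (A \<union> nbhd_set V E A) \<and> v \<in> del_verts V (A \<union> nbhd_set V E A))
      = cond_exp V (\<gamma> / real \<Delta>) (\<lambda>A. real (card {w\<in>W. A \<inter> ?N w = {}})) (\<lambda>A. A \<inter> S = {})"
    using assms(6,9,10)
    by (intro cond_exp_cong)
       (simp_all add: in_del_verts_closed_nbhd_iff codeg_del_verts_closed_nbhd W_def S_def Int_Un_distrib)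
  also have "\<dots> = (\<Sum>w\<in>W. (1 - \<gamma> / real \<Delta>) ^ card (?N w - S))"
  proof (rule cond_exp_card_disjoint)
    show "finite W"
      using \<open>finite V\<close> \<open>W \<subseteq> V\<close> finite_subset by blast
    show "\<gamma> / real \<Delta> < 1"
      using assms(1-3) by (simp add: divide_less_eq)
  qed fact+
  also have "\<dots> \<le> (\<Sum>w\<in>W. 1 - \<gamma> + \<gamma>\<^sup>2)"
  proof (intro sum_mono survival_power_le[OF assms(1-5)])
    fix w assume "w \<in> W"
    then have w: "w \<in> V" "w \<noteq> u" "w \<noteq> v"
      using assms(6) by (auto simp: W_def nbhd_def simple_graph_def)
    show "real \<Delta> - 4 - 2 * \<eta> * real \<Delta> \<le> real (card (?N w - S))"
      unfolding S_def by (rule card_closed_nbhd_Diff_ge[OF assms(6-8) w(1) assms(9,10) w(2,3)])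
  qed
  also have "\<dots> = (1 - \<gamma> + \<gamma>\<^sup>2) * real (codeg V E u v)"
    by (simp add: W_def codeg_def)
  finally show ?thesis .
qed

theorem lemma3p2:
  fixes V :: "'a set" and E :: "'a \<Rightarrow> 'a \<Rightarrow> bool"
    and \<Delta> :: nat and \<gamma> \<eta> :: real
  assumes "\<Delta> \<ge> 1"
    and "0 < \<gamma>" and "\<gamma> \<le> 1/2"
    and "1 / sqrt (real \<Delta>) \<le> \<eta>" and "\<eta> \<le> \<gamma>^2 / 8"
    and "simple_graph V E"
    and "\<forall>v\<in>V. deg V E v \<in> {\<Delta> - 1, \<Delta>}"
    and "\<forall>u\<in>V. \<forall>v\<in>V. u \<noteq> v \<longrightarrow> real (codeg V E u v) \<le> \<eta> * real \<Delta>"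
  shows "(\<forall>v\<in>V.
            cond_exp V (\<gamma> / real \<Delta>)
              (\<lambda>A. real (deg (del_verts V (A \<union> nbhd_set V E A)) E v))
              (\<lambda>A. v \<in> del_verts V (A \<union> nbhd_set V E A))
            \<le> (1 - \<gamma> + \<gamma>^2) * real (deg V E v))
       \<and> (\<forall>u\<in>V. \<forall>v\<in>V. u \<noteq> v \<longrightarrow>
            cond_exp V (\<gamma> / real \<Delta>)
              (\<lambda>A. real (codeg (del_verts V (A \<union> nbhd_set V E A)) E u v))
              (\<lambda>A. u \<in> del_verts V (A \<union> nbhd_set V E A) \<and> v \<in> del_verts V (A \<union> nbhd_set V E A))
            \<le> (1 - \<gamma> + \<gamma>^2) * real (codeg V E u v))"
proof -
  have "\<forall>x\<in>V. \<Delta> \<le> Suc (deg V E x)"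
    using assms(7) by auto
  note codeg_bound = cond_exp_codeg_survivors_le[OF assms(1-6) this assms(8)]
  show ?thesis
  proof (intro conjI ballI impI)
    fix v assume "v \<in> V"
    show "cond_exp V (\<gamma> / real \<Delta>)
            (\<lambda>A. real (deg (del_verts V (A \<union> nbhd_set V E A)) E v))
            (\<lambda>A. v \<in> del_verts V (A \<union> nbhd_set V E A))
          \<le> (1 - \<gamma> + \<gamma>^2) * real (deg V E v)"
      using codeg_bound[OF \<open>v \<in> V\<close> \<open>v \<in> V\<close>] by (simp add: codeg_self)
  qed (simp add: codeg_bound)
qed

end
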